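(* For every multiset of formulae $\Gamma$ and formula $C$: if the sequent $\Gamma\vdash C$ is derivable in ${\rm Linc}^-$ extended with the rule $subst$, then it is derivable in ${\rm Linc}^-$ without $subst$; moreover, if it has a cut-free (i.e. $mc$-free) derivation using $subst$, then it has a cut-free derivation without $subst$.
   Context: ${\rm Linc}^-$ is an intuitionistic sequent calculus over simply typed $\lambda$-terms (formulae are terms of type $o$, built from parameters $X^p\,\vec t$, equalities $s=t$, predicate atoms $p\,\vec t$, $\bot,\top,\land,\lor,\supset,\forall,\exists$), with a fixed definition of inductive and co-inductive predicate clauses. Its rules are: $init$ ($C\vdash C$); left contraction and weakening; multicut $mc$ (from $\Delta_i\vdash B_i$, $i=1..n$, $n>0$, and $B_1,\dots,B_n,\Gamma\vdash C$ infer $\Delta_1,\dots,\Delta_n,\Gamma\vdash C$); standard intuitionistic left/right rules for the connectives and quantifiers; ${\rm eq}\mathcal{R}$: $\Gamma\vdash t=t$; ${\rm eq}\mathcal{L}$: from the set of premises $\{\Gamma\rho\vdash C\rho\mid s\rho=_{\beta\eta}t\rho\}$ (one for each substitution $\rho$ unifying $s,t$) infer $s=t,\Gamma\vdash C$; and left/right rules for inductive and co-inductive predicates and parameters (${\rm I}\mathcal{L},{\rm I}\mathcal{R},{\rm I}\mathcal{R}_p,{\rm CI}\mathcal{L},{\rm CI}\mathcal{L}_p,{\rm CI}\mathcal{R}$). The rule $subst$ is: from the premises $\{\Gamma\theta\vdash C\theta\}_\theta$, one for every substitution $\theta$ of terms for eigenvariables, infer $\Gamma\vdash C$. A derivation is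 cut-free if it contains no instance of $mc$. *)

theory Defs
  imports Main "HOL-Library.Multiset"
begin

datatype ty = TBase string | TO | TArr ty ty

fun arg_tys :: "ty \<Rightarrow> ty list" where
  "arg_tys (TArr a b) = a # arg_tys b"
| "arg_tys _ = []"

definition pred_ty :: "ty \<Rightarrow> bool" where
  "pred_ty T \<longleftrightarrow> T = foldr TArr (arg_tys T) TO"

section \<open>Simply typed lambda terms (de Bruijn indices for bound variables)\<close>

datatype const =
    CBot | CTop | CAnd | COr | CImp
  | CAll ty | CEx ty | CEq ty
  | CPred string
  | CSym string

datatype trm =
    TBnd nat
  | TFree nat ty            \<comment> \<open>eigenvariable (name, type)\<close>
  | TPar nat string         \<comment> \<open>parameter X^p (name X, annotation p)\<close>
  | TCon const
  | TApp trm trm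
  | TLam ty trm

datatype fixkind = Mu | Nu

text \<open>A definition: the signature (predicate and constant types), the set of
  defined predicates, and for each predicate p its clause
  p x1..xn =mu/nu= B p x1..xn, where body p = B is a closed term of type
  (type of p) -> (type of p).\<close>
record defn =
  preds :: "string set"
  psig  :: "string \<Rightarrow> ty"
  csig  :: "string \<Rightarrow> ty"
  kind  :: "string \<Rightarrow> fixkind"
  body  :: "string \<Rightarrow> trm"

fun ctype :: "defn \<Rightarrow> const \<Rightarrow> ty" where
  "ctype D CBot = TO"
| "ctype D CTop = TO"
| "ctype D CAnd = TArr TO (TArr TO TO)"
| "ctype D COr = TArr TO (TArr TO TO)"
| "ctype D CImp = TArr TO (TArr TO TO)"
| "ctype D (CAll T) = TArr (TArr T TO) TO"
| "ctype D (CEx T) = TArr (TArr T TO) TO"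
| "ctype D (CEq T) = TArr T (TArr T TO)"
| "ctype D (CPred p) = psig D p"
| "ctype D (CSym c) = csig D c"

fun con_ok :: "defn \<Rightarrow> const \<Rightarrow> bool" where
  "con_ok D (CPred p) = (p \<in> preds D)"
| "con_ok D _ = True"

inductive has_ty :: "defn \<Rightarrow> ty list \<Rightarrow> trm \<Rightarrow> ty \<Rightarrow> bool" for D where
  ty_bnd: "i < length E \<Longrightarrow> has_ty D E (TBnd i) (E ! i)"
| ty_free: "has_ty D E (TFree n T) T"
| ty_par: "p \<in> preds D \<Longrightarrow> has_ty D E (TPar X p) (psig D p)"
| ty_con: "con_ok D c \<Longrightarrow> has_ty D E (TCon c) (ctype D c)"
| ty_app: "has_ty D E s (TArr A B) \<Longrightarrow> has_ty D E t A \<Longrightarrow> has_ty D E (TApp s t) B"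
| ty_lam: "has_ty D (A # E) t B \<Longrightarrow> has_ty D E (TLam A t) (TArr A B)"

definition formula :: "defn \<Rightarrow> trm \<Rightarrow> bool" where
  "formula D F \<longleftrightarrow> has_ty D [] F TO"

definition wf_seq :: "defn \<Rightarrow> trm multiset \<Rightarrow> trm \<Rightarrow> bool" where
  "wf_seq D \<Gamma> C \<longleftrightarrow> (\<forall>F\<in>#\<Gamma>. formula D F) \<and> formula D C"

fun lift :: "nat \<Rightarrow> trm \<Rightarrow> trm" where
  "lift k (TBnd i) = (if i < k then TBnd i else TBnd (Suc i))"
| "lift k (TApp s t) = TApp (lift k s) (lift k t)"
| "lift k (TLam T t) = TLam T (lift (Suc k) t)"
| "lift k t = t"

fun subst_bd :: "trm \<Rightarrow> nat \<Rightarrow> trm \<Rightarrow> trm" where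
  "subst_bd (TBnd i) k u = (if i < k then TBnd i else if i = k then u else TBnd (i - 1))"
| "subst_bd (TApp s t) k u = TApp (subst_bd s k u) (subst_bd t k u)"
| "subst_bd (TLam T t) k u = TLam T (subst_bd t (Suc k) (lift 0 u))"
| "subst_bd t k u = t"

fun loose :: "trm \<Rightarrow> nat \<Rightarrow> bool" where
  "loose (TBnd i) k = (i = k)"
| "loose (TApp s t) k = (loose s k \<or> loose t k)"
| "loose (TLam T t) k = loose t (Suc k)"
| "loose t k = False"

inductive bestep :: "trm \<Rightarrow> trm \<Rightarrow> bool" where
  beta: "bestep (TApp (TLam T s) t) (subst_bd s 0 t)"
| eta: "\<not> loose s 0 \<Longrightarrow> bestep (TLam T (TApp s (TBnd 0))) (subst_bd s 0 (TBnd 0))"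
| appL: "bestep s s' \<Longrightarrow> bestep (TApp s t) (TApp s' t)"
| appR: "bestep t t' \<Longrightarrow> bestep (TApp s t) (TApp s t')"
| lam: "bestep t t' \<Longrightarrow> bestep (TLam T t) (TLam T t')"

definition beq :: "trm \<Rightarrow> trm \<Rightarrow> bool" where
  "beq = equivclp bestep"

fun frees :: "trm \<Rightarrow> nat set" where
  "frees (TFree n T) = {n}"
| "frees (TApp s t) = frees s \<union> frees t"
| "frees (TLam T t) = frees t"
| "frees _ = {}"

definition frees_seq :: "trm multiset \<Rightarrow> trm \<Rightarrow> nat set" where
  "frees_seq \<Gamma> C = (\<Union>F\<in>set_mset \<Gamma>. frees F) \<union> frees C"

fun esubst :: "(nat \<Rightarrow> ty \<Rightarrow> trm) \<Rightarrow> trm \<Rightarrow> trm" where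
  "esubst \<theta> (TFree n T) = \<theta> n T"
| "esubst \<theta> (TApp s t) = TApp (esubst \<theta> s) (esubst \<theta> t)"
| "esubst \<theta> (TLam T t) = TLam T (esubst \<theta> t)"
| "esubst \<theta> t = t"

definition wt_subst :: "defn \<Rightarrow> (nat \<Rightarrow> ty \<Rightarrow> trm) \<Rightarrow> bool" where
  "wt_subst D \<theta> \<longleftrightarrow> (\<forall>n T. has_ty D [] (\<theta> n T) T)"

definition apps :: "trm \<Rightarrow> trm list \<Rightarrow> trm" where
  "apps h ts = foldl TApp h ts"

abbreviation fBot where "fBot \<equiv> TCon CBot"
abbreviation fTop where "fTop \<equiv> TCon CTop"
abbreviation fAnd where "fAnd A B \<equiv> TApp (TApp (TCon CAnd) A) B"
abbreviation fOr where "fOr A B \<equiv> TApp (TApp (TCon COr) A) B"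
abbreviation fImp where "fImp A B \<equiv> TApp (TApp (TCon CImp) A) B"
abbreviation fAll where "fAll T P \<equiv> TApp (TCon (CAll T)) P"
abbreviation fEx where "fEx T P \<equiv> TApp (TCon (CEx T)) P"
abbreviation fEq where "fEq T s t \<equiv> TApp (TApp (TCon (CEq T)) s) t"
abbreviation fPred where "fPred p \<equiv> TCon (CPred p)"

definition fresh_args :: "defn \<Rightarrow> string \<Rightarrow> nat set \<Rightarrow> trm list \<Rightarrow> bool" where
  "fresh_args D p V ys \<longleftrightarrow> (\<exists>ns. distinct ns \<and> set ns \<inter> V = {} \<and>
      length ns = length (arg_tys (psig D p)) \<and>
      ys = map2 TFree ns (arg_tys (psig D p)))"

definition wf_defn :: "defn \<Rightarrow> bool" where
  "wf_defn D \<longleftrightarrow> (\<forall>p\<in>preds D. pred_ty (psig D p) \<and>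
      has_ty D [] (body D p) (TArr (psig D p) (psig D p)))"

text \<open>der D s c Gamma C: the sequent Gamma |- C is derivable; the rule subst
  may be used iff s, the rule mc may be used iff c.  Formulae are
  identified up to beta-eta conversion (rule conv).\<close>

inductive der :: "defn \<Rightarrow> bool \<Rightarrow> bool \<Rightarrow> trm multiset \<Rightarrow> trm \<Rightarrow> bool"
  for D :: defn and s :: bool and c :: bool where
  conv: "der D s c \<Gamma>' C' \<Longrightarrow> rel_mset beq \<Gamma>' \<Gamma> \<Longrightarrow> beq C' C \<Longrightarrow> wf_seq D \<Gamma> C
         \<Longrightarrow> der D s c \<Gamma> C"
| init: "wf_seq D {#C#} C \<Longrightarrow> der D s c {#C#} C"
| cL: "der D s c (add_mset B (add_mset B \<Gamma>)) C \<Longrightarrow> wf_seq D (add_mset B \<Gamma>) C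
       \<Longrightarrow> der D s c (add_mset B \<Gamma>) C"
| wL: "der D s c \<Gamma> C \<Longrightarrow> wf_seq D (add_mset B \<Gamma>) C \<Longrightarrow> der D s c (add_mset B \<Gamma>) C"
| mc: "c \<Longrightarrow> ps \<noteq> [] \<Longrightarrow> (\<forall>x\<in>set ps. der D s c (fst x) (snd x))
       \<Longrightarrow> der D s c (mset (map snd ps) + \<Gamma>) C
       \<Longrightarrow> wf_seq D (sum_list (map fst ps) + \<Gamma>) C
       \<Longrightarrow> der D s c (sum_list (map fst ps) + \<Gamma>) C"
| botL: "wf_seq D (add_mset fBot \<Gamma>) C \<Longrightarrow> der D s c (add_mset fBot \<Gamma>) C"
| topR: "wf_seq D \<Gamma> fTop \<Longrightarrow> der D s c \<Gamma> fTop"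
| andL1: "der D s c (add_mset A \<Gamma>) C \<Longrightarrow> wf_seq D (add_mset (fAnd A B) \<Gamma>) C
          \<Longrightarrow> der D s c (add_mset (fAnd A B) \<Gamma>) C"
| andL2: "der D s c (add_mset B \<Gamma>) C \<Longrightarrow> wf_seq D (add_mset (fAnd A B) \<Gamma>) C
          \<Longrightarrow> der D s c (add_mset (fAnd A B) \<Gamma>) C"
| andR: "der D s c \<Gamma> A \<Longrightarrow> der D s c \<Gamma> B \<Longrightarrow> wf_seq D \<Gamma> (fAnd A B)
         \<Longrightarrow> der D s c \<Gamma> (fAnd A B)"
| orL: "der D s c (add_mset A \<Gamma>) C \<Longrightarrow> der D s c (add_mset B \<Gamma>) C
        \<Longrightarrow> wf_seq D (add_mset (fOr A B) \<Gamma>) C \<Longrightarrow> der D s c (add_mset (fOr A B) \<Gamma>) C"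
| orR1: "der D s c \<Gamma> A \<Longrightarrow> wf_seq D \<Gamma> (fOr A B) \<Longrightarrow> der D s c \<Gamma> (fOr A B)"
| orR2: "der D s c \<Gamma> B \<Longrightarrow> wf_seq D \<Gamma> (fOr A B) \<Longrightarrow> der D s c \<Gamma> (fOr A B)"
| impL: "der D s c \<Gamma> A \<Longrightarrow> der D s c (add_mset B \<Gamma>) C
         \<Longrightarrow> wf_seq D (add_mset (fImp A B) \<Gamma>) C \<Longrightarrow> der D s c (add_mset (fImp A B) \<Gamma>) C"
| impR: "der D s c (add_mset A \<Gamma>) B \<Longrightarrow> wf_seq D \<Gamma> (fImp A B) \<Longrightarrow> der D s c \<Gamma> (fImp A B)"
| allL: "has_ty D [] t T \<Longrightarrow> der D s c (add_mset (TApp P t) \<Gamma>) C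
         \<Longrightarrow> wf_seq D (add_mset (fAll T P) \<Gamma>) C \<Longrightarrow> der D s c (add_mset (fAll T P) \<Gamma>) C"
| allR: "y \<notin> frees_seq \<Gamma> (fAll T P) \<Longrightarrow> der D s c \<Gamma> (TApp P (TFree y T))
         \<Longrightarrow> wf_seq D \<Gamma> (fAll T P) \<Longrightarrow> der D s c \<Gamma> (fAll T P)"
| exL: "y \<notin> frees_seq (add_mset (fEx T P) \<Gamma>) C \<Longrightarrow> der D s c (add_mset (TApp P (TFree y T)) \<Gamma>) C
        \<Longrightarrow> wf_seq D (add_mset (fEx T P) \<Gamma>) C \<Longrightarrow> der D s c (add_mset (fEx T P) \<Gamma>) C"
| exR: "has_ty D [] t T \<Longrightarrow> der D s c \<Gamma> (TApp P t) \<Longrightarrow> wf_seq D \<Gamma> (fEx T P)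
        \<Longrightarrow> der D s c \<Gamma> (fEx T P)"
| eqR: "wf_seq D \<Gamma> (fEq T t t) \<Longrightarrow> der D s c \<Gamma> (fEq T t t)"
| eqL: "(\<forall>\<rho>. wt_subst D \<rho> \<and> beq (esubst \<rho> u) (esubst \<rho> v) \<longrightarrow>
           der D s c (image_mset (esubst \<rho>) \<Gamma>) (esubst \<rho> C))
        \<Longrightarrow> wf_seq D (add_mset (fEq T u v) \<Gamma>) C \<Longrightarrow> der D s c (add_mset (fEq T u v) \<Gamma>) C"
| IL: "kind D p = Mu \<Longrightarrow> has_ty D [] S (psig D p) \<Longrightarrow> fresh_args D p (frees S) ys
       \<Longrightarrow> der D s c {# apps (TApp (body D p) S) ys #} (apps S ys)
       \<Longrightarrow> der D s c (add_mset (apps S ts) \<Gamma>) C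
       \<Longrightarrow> wf_seq D (add_mset (apps (fPred p) ts) \<Gamma>) C
       \<Longrightarrow> der D s c (add_mset (apps (fPred p) ts) \<Gamma>) C"
| IR: "kind D p = Mu \<Longrightarrow> der D s c \<Gamma> (apps (TApp (body D p) (fPred p)) ts)
       \<Longrightarrow> wf_seq D \<Gamma> (apps (fPred p) ts) \<Longrightarrow> der D s c \<Gamma> (apps (fPred p) ts)"
| IRp: "kind D p = Mu \<Longrightarrow> der D s c \<Gamma> (apps (TApp (body D p) (TPar X p)) ts)
       \<Longrightarrow> wf_seq D \<Gamma> (apps (TPar X p) ts) \<Longrightarrow> der D s c \<Gamma> (apps (TPar X p) ts)"
| CIL: "kind D p = Nu \<Longrightarrow> der D s c (add_mset (apps (TApp (body D p) (fPred p)) ts) \<Gamma>) C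
       \<Longrightarrow> wf_seq D (add_mset (apps (fPred p) ts) \<Gamma>) C
       \<Longrightarrow> der D s c (add_mset (apps (fPred p) ts) \<Gamma>) C"
| CILp: "kind D p = Nu \<Longrightarrow> der D s c (add_mset (apps (TApp (body D p) (TPar X p)) ts) \<Gamma>) C
       \<Longrightarrow> wf_seq D (add_mset (apps (TPar X p) ts) \<Gamma>) C
       \<Longrightarrow> der D s c (add_mset (apps (TPar X p) ts) \<Gamma>) C"
| CIR: "kind D p = Nu \<Longrightarrow> has_ty D [] S (psig D p) \<Longrightarrow> fresh_args D p (frees S) ys
       \<Longrightarrow> der D s c \<Gamma> (apps S ts)
       \<Longrightarrow> der D s c {# apps S ys #} (apps (TApp (body D p) S) ys)
       \<Longrightarrow> wf_seq D \<Gamma> (apps (fPred p) ts) \<Longrightarrow> der D s c \<Gamma> (apps (fPred p) ts)"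
| subst: "s \<Longrightarrow> (\<forall>\<theta>. wt_subst D \<theta> \<longrightarrow> der D s c (image_mset (esubst \<theta>) \<Gamma>) (esubst \<theta> C))
          \<Longrightarrow> wf_seq D \<Gamma> C \<Longrightarrow> der D s c \<Gamma> C"

end

theory Submission
  imports Defs
begin

text \<open>The identity substitution, mapping every eigenvariable to itself, is well typed, so
  among the premises of an instance of subst there is always the conclusion itself.
  Replacing each use of subst by this premise removes the rule without touching any
  other inference, in particular without introducing or removing instances of mc.\<close>

lemma esubst_TFree [simp]: "esubst TFree t = t"
  by (induction t) auto

lemma image_mset_esubst_TFree [simp]: "image_mset (esubst TFree) M = M"
  by (induction M) auto

lemma wt_subst_TFree: "wt_subst D TFree"
  by (simp add: wt_subst_def ty_free)

lemma der_without_subst: "der D s c \<Gamma> C \<Longrightarrow> der D False c \<Gamma> C"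
proof (induction rule: der.induct)
  case (mc ps \<Gamma> C)
  then show ?case by (intro der.mc) auto
next
  case (eqL T u v \<Gamma> C)
  then show ?case by (intro der.eqL) auto
next
  case (subst \<Gamma> C)
  then show ?case using wt_subst_TFree by force
qed (auto intro: der.intros)

theorem mainTheorem4:
  fixes D :: defn and \<Gamma> :: "trm multiset" and C :: trm
  assumes "wf_defn D"
  shows "(der D True True \<Gamma> C \<longrightarrow> der D False True \<Gamma> C)
       \<and> (der D True False \<Gamma> C \<longrightarrow> der D False False \<Gamma> C)"
  using der_without_subst by blast

end
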